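(* Let $\mathbf{F}$ be a Baire foliage tree on a topological space $X$ and let $A\subseteq X$ be at most countable. Then there is a Baire foliage tree $\mathbf{H}$ on the subspace $X\setminus A$ such that for every $p\in X\setminus A$ there is a strictly increasing function $f_p:\omega\to\omega$ with $$\{2n+1: n\in\omega\text{ and }f_p(n)\in\mathrm{rise}_{\mathbf{F}}(p,U)\}\subseteq\mathrm{rise}_{\mathbf{H}}(p,U\setminus A)$$ for all neighbourhoods $U$ of $p$ in $X$.
   Context: Neighbourhoods are not necessarily open. $\omega=\{0,1,2,\dots\}$, ${}^{<\omega}\omega$ is the set of finite sequences of natural numbers. A tree is a strict partial order in which the set of predecessors of every node is well-ordered; $\mathrm{height}(x)$ is the ordinal isomorphic to the set of predecessors of $x$; a branch is a maximal chain; $\mathrm{sons}(x)$ is the set of immediate successors of $x$; $0$ denotes the least node. A foliage tree is a pair $\mathbf{F}=(T,l)$ with $T$ a tree (skeleton) and $l$ a function on its nodes, $\mathbf{F}_x:=l(x)$; tree notions apply via the skeleton. $\mathrm{shoot}_{\mathbf{F}}(v)=\{\bigcup_{x\in C}\mathbf{F}_x: C\text{ a cofinite subset of }\mathrm{sons}_{\mathbf{F}}(v)\}$; $\mathrm{scope}_{\mathbf{F}}(p)=\{x:p\in\mathbf{F}_x\}$. For families $\gamma,\delta$ of sets, $\gamma\gg\delta$ means every nonempty $D\in\delta$ contains some nonempty $G\in\gamma$. $\mathrm{rise}_{\mathbf{F}}(p,U)=\{\mathrm{height}_{\mathbf{F}}(v): v\in\mathrm{scope}_{\mathbf{F}}(p),\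 \mathrm{shoot}_{\mathbf{F}}(v)\gg\{U\}\}$. $\mathbf{F}$ is locally strict if each non-maximal leaf $\mathbf{F}_x$ is the disjoint union of $\mathbf{F}_s$, $s\in\mathrm{sons}(x)$; has strict branches if it has a node and for each branch $B$, $\bigcap_{x\in B}\mathbf{F}_x$ is a singleton; is open in $X$ if all leaves are open in $X$; is a foliage $\omega,\omega$-tree if its skeleton is order-isomorphic to $({}^{<\omega}\omega,\subsetneq)$. A Baire foliage tree on $X$ is an open in $X$, locally strict foliage $\omega,\omega$-tree with strict branches and $\mathbf{F}_{0_{\mathbf{F}}}=X$. *)

theory Defs
  imports "HOL-Analysis.Analysis" "HOL-Library.Sublist"
begin

text \<open>A foliage \<omega>,\<omega>-tree is represented (up to isomorphism of skeletons) by its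
  labelling function on the canonical skeleton: finite sequences of naturals
  ordered by strict prefix. The height of a node s is length s; its sons are s @ [n].\<close>

type_synonym 'a foliage = "nat list \<Rightarrow> 'a set"

definition sons :: "nat list \<Rightarrow> nat list set" where
  "sons s = range (\<lambda>n. s @ [n])"

definition shoot :: "'a foliage \<Rightarrow> nat list \<Rightarrow> 'a set set" where
  "shoot F v = {\<Union>x\<in>C. F x | C. C \<subseteq> sons v \<and> finite (sons v - C)}"

definition scope :: "'a foliage \<Rightarrow> 'a \<Rightarrow> nat list set" where
  "scope F p = {x. p \<in> F x}"

definition gg :: "'a set set \<Rightarrow> 'a set set \<Rightarrow> bool" where
  "gg \<gamma> \<delta> \<longleftrightarrow> (\<forall>D\<in>\<delta>. D \<noteq> {} \<longrightarrow> (\<exists>G\<in>\<gamma>. G \<noteq> {} \<and> G \<subseteq> D))"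

definition rise :: "'a foliage \<Rightarrow> 'a \<Rightarrow> 'a set \<Rightarrow> nat set" where
  "rise F p U = {length v | v. v \<in> scope F p \<and> gg (shoot F v) {U}}"

definition tree_chain :: "nat list set \<Rightarrow> bool" where
  "tree_chain B \<longleftrightarrow> (\<forall>x\<in>B. \<forall>y\<in>B. x = y \<or> strict_prefix x y \<or> strict_prefix y x)"

definition tree_branch :: "nat list set \<Rightarrow> bool" where
  "tree_branch B \<longleftrightarrow> tree_chain B \<and> (\<forall>C. tree_chain C \<and> B \<subseteq> C \<longrightarrow> C = B)"

definition locally_strict :: "'a foliage \<Rightarrow> bool" where
  "locally_strict F \<longleftrightarrow>
     (\<forall>x. F x = (\<Union>s\<in>sons x. F s) \<and> disjoint_family_on F (sons x))"
  \<comment> \<open>every node of the skeleton is non-maximal\<close>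

definition strict_branches :: "'a foliage \<Rightarrow> bool" where
  "strict_branches F \<longleftrightarrow> (\<forall>B. tree_branch B \<longrightarrow> (\<exists>p. (\<Inter>x\<in>B. F x) = {p}))"
  \<comment> \<open>the skeleton trivially has a node\<close>

definition open_foliage :: "'a topology \<Rightarrow> 'a foliage \<Rightarrow> bool" where
  "open_foliage X F \<longleftrightarrow> (\<forall>x. openin X (F x))"

definition baire_foliage_tree :: "'a topology \<Rightarrow> 'a foliage \<Rightarrow> bool" where
  "baire_foliage_tree X F \<longleftrightarrow>
     open_foliage X F \<and> locally_strict F \<and> strict_branches F \<and> F [] = topspace X"

definition nbhd :: "'a topology \<Rightarrow> 'a \<Rightarrow> 'a set \<Rightarrow> bool" where
  "nbhd X p U \<longleftrightarrow> U \<subseteq> topspace X \<and> (\<exists>V. openin X V \<and> p \<in> V \<and> V \<subseteq> U)"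

end

theory Submission
  imports Defs
begin

(* Enumerate A as a_0, a_1, ... and build H as a re-indexing of F: every node w of H is
   sent to a node node w of F, and H w = F (node w) - A.  At odd heights the sons of w
   correspond to the sons of node w.  At height 2n, if a_n lies in F (node w), the sons of w
   are instead the nodes of F branching off the branch of a_n below node w; their leaves
   partition F (node w) - {a_n}.  So every branch of H runs along a branch of F whose unique
   point was never removed, which gives strict branches, while the odd heights copy the
   shoots of F: f_p n is the height in F of the node of H of height 2n + 1 containing p. *)

definition initial :: "(nat \<Rightarrow> 'b) \<Rightarrow> nat \<Rightarrow> 'b list" where
  "initial \<alpha> k = map \<alpha> [0..<k]"

lemma length_initial [simp]: "length (initial \<alpha> k) = k"
  by (simp add: initial_def)

lemma initial_Suc [simp]: "initial \<alpha> (Suc k) = initial \<alpha> k @ [\<alpha> k]"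
  by (simp add: initial_def)

lemma take_initial: "k \<le> j \<Longrightarrow> take k (initial \<alpha> j) = initial \<alpha> k"
  by (simp add: initial_def take_map)

lemma nth_initial [simp]: "i < k \<Longrightarrow> initial \<alpha> k ! i = \<alpha> i"
  by (simp add: initial_def)

lemma prefix_initial: "k \<le> j \<Longrightarrow> prefix (initial \<alpha> k) (initial \<alpha> j)"
  by (metis take_initial take_is_prefix)

lemma prefix_length_eq: "prefix x y \<Longrightarrow> length x = length y \<Longrightarrow> x = y"
  by (auto simp: prefix_def)

lemma comparable_prefix:
  assumes "prefix x y \<or> prefix y x" "length x \<le> length y"
  shows "prefix x y"
proof (cases "prefix x y")
  case False
  with assms(1) have "prefix y x" by blast
  with assms(2) have "y = x" using prefix_length_eq prefix_length_le by (metis le_antisym)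
  with False show ?thesis by simp
qed

lemma comparable_nth_eq:
  assumes "prefix x y \<or> prefix y x" "i < length x" "i < length y"
  shows "x ! i = y ! i"
  using assms by (auto simp: prefix_def nth_append)

lemma prefix_chain_eq_initial:
  assumes mono: "\<And>k j. k \<le> j \<Longrightarrow> prefix (s k) (s j)" and long: "\<And>k. k \<le> length (s k)"
  shows "\<exists>\<alpha>. \<forall>k. initial \<alpha> (length (s k)) = s k"
proof (intro exI allI)
  fix k
  show "initial (\<lambda>i. s (Suc i) ! i) (length (s k)) = s k"
  proof (rule nth_equalityI)
    fix i assume "i < length (initial (\<lambda>i. s (Suc i) ! i) (length (s k)))"
    then have "i < length (s k)" by simp
    moreover have "i < length (s (Suc i))" using long[of "Suc i"] by simp
    moreover have "prefix (s k) (s (Suc i)) \<or> prefix (s (Suc i)) (s k)"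
      using mono[of k "Suc i"] mono[of "Suc i" k] by linarith
    ultimately show "initial (\<lambda>i. s (Suc i) ! i) (length (s k)) ! i = s k ! i"
      by (simp add: initial_def comparable_nth_eq)
  qed simp
qed

lemma tree_chain_iff: "tree_chain B \<longleftrightarrow> (\<forall>x\<in>B. \<forall>y\<in>B. prefix x y \<or> prefix y x)"
  unfolding tree_chain_def strict_prefix_def by (metis prefix_order.eq_iff)

lemma tree_branch_comparable:
  "tree_branch B \<Longrightarrow> x \<in> B \<Longrightarrow> y \<in> B \<Longrightarrow> prefix x y \<or> prefix y x"
  unfolding tree_branch_def tree_chain_iff by blast

lemma tree_branch_insert:
  assumes B: "tree_branch B" and comparable: "\<And>x. x \<in> B \<Longrightarrow> prefix x y \<or> prefix y x"
  shows "y \<in> B"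
proof -
  have "tree_chain (insert y B)"
    using B comparable unfolding tree_branch_def tree_chain_iff by blast
  with B show ?thesis unfolding tree_branch_def by blast
qed

lemma Nil_in_tree_branch: "tree_branch B \<Longrightarrow> [] \<in> B"
  by (rule tree_branch_insert) simp_all

lemma tree_branch_extend:
  assumes B: "tree_branch B" and x: "x \<in> B"
  shows "\<exists>y\<in>B. length y = Suc (length x)"
proof (cases "\<exists>z\<in>B. length x < length z")
  case True
  then obtain z where z: "z \<in> B" "length x < length z" by blast
  let ?y = "take (Suc (length x)) z"
  have "?y \<in> B"
  proof (rule tree_branch_insert[OF B])
    fix w assume "w \<in> B"
    then consider "prefix w z" | "prefix z w" using tree_branch_comparable[OF B _ z(1)] by blast
    then show "prefix w ?y \<or> prefix ?y w"
    proof cases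
      case 1 then show ?thesis using prefix_same_cases take_is_prefix by blast
    next
      case 2 then show ?thesis using prefix_order.trans take_is_prefix by blast
    qed
  qed
  with z(2) show ?thesis by force
next
  case False
  have "x @ [0] \<in> B"
  proof (rule tree_branch_insert[OF B])
    fix w assume w: "w \<in> B"
    with False have "length w \<le> length x" by (simp add: not_less)
    with tree_branch_comparable[OF B w x] have "prefix w x" by (rule comparable_prefix)
    then show "prefix w (x @ [0]) \<or> prefix (x @ [0]) w" by auto
  qed
  then show ?thesis by force
qed

lemma tree_branch_eq_range_initial:
  assumes B: "tree_branch B"
  shows "\<exists>\<alpha>. B = range (initial \<alpha>)"
proof -
  have "\<exists>x\<in>B. length x = k" for k
  proof (induction k)
    case 0 show ?case using Nil_in_tree_branch[OF B] by force
  next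
    case (Suc k)
    then obtain x where "x \<in> B" "length x = k" by blast
    with tree_branch_extend[OF B] show ?case by force
  qed
  then obtain s where s: "\<And>k. s k \<in> B" "\<And>k. length (s k) = k" by metis
  have same: "x = s (length x)" if "x \<in> B" for x
    using comparable_prefix[OF tree_branch_comparable[OF B that s(1)]] prefix_length_eq s(2)
    by (metis order_refl)
  have "prefix (s k) (s j)" if "k \<le> j" for k j
    using comparable_prefix[OF tree_branch_comparable[OF B s(1) s(1)]] s(2) that by metis
  with s(2) obtain \<alpha> where "\<And>k. initial \<alpha> (length (s k)) = s k"
    using prefix_chain_eq_initial[of s] by force
  then have "s = initial \<alpha>" using s(2) by auto
  moreover have "B = range s" using same s(1) by blast
  ultimately show ?thesis by blast
qed

lemma tree_branch_range_initial: "tree_branch (range (initial \<alpha>))"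
  unfolding tree_branch_def
proof (intro conjI allI impI)
  show "tree_chain (range (initial \<alpha>))"
    unfolding tree_chain_iff by (auto intro: nat_le_linear[THEN disjE] prefix_initial)
  fix C assume C: "tree_chain C \<and> range (initial \<alpha>) \<subseteq> C"
  have "c \<in> range (initial \<alpha>)" if "c \<in> C" for c
  proof -
    have "prefix c (initial \<alpha> (length c)) \<or> prefix (initial \<alpha> (length c)) c"
      using C that unfolding tree_chain_iff by blast
    then have "prefix c (initial \<alpha> (length c))" by (rule comparable_prefix) simp
    then have "c = initial \<alpha> (length c)" by (rule prefix_length_eq) simp
    then show ?thesis by blast
  qed
  with C show "C = range (initial \<alpha>)" by blast
qed

lemma strict_branches_initial:
  assumes "strict_branches F"
  shows "\<exists>q. (\<Inter>k. F (initial \<alpha> k)) = {q}"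
proof -
  obtain q where "(\<Inter>x\<in>range (initial \<alpha>). F x) = {q}"
    using assms tree_branch_range_initial[of \<alpha>] unfolding strict_branches_def by blast
  then have "(\<Inter>k. F (initial \<alpha> k)) = {q}" by (simp only: image_image)
  then show ?thesis ..
qed

lemma strict_branches_nonempty:
  assumes "strict_branches F"
  shows "F x \<noteq> {}"
proof -
  define \<alpha> where "\<alpha> i = (if i < length x then x ! i else 0)" for i
  have x: "initial \<alpha> (length x) = x" by (rule nth_equalityI) (simp_all add: \<alpha>_def)
  obtain q where "(\<Inter>k. F (initial \<alpha> k)) = {q}" using strict_branches_initial[OF assms] by blast
  then have "q \<in> F (initial \<alpha> (length x))" by blast
  with x show ?thesis by auto
qed

lemma shoot_eq: "shoot F v = {(\<Union>m\<in>M. F (v @ [m])) | M. finite (- M)}"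
proof -
  let ?son = "\<lambda>m. v @ [m]"
  have inj: "inj ?son" by (simp add: inj_def)
  have finite_iff: "finite (sons v - ?son ` M) \<longleftrightarrow> finite (- M)" for M
  proof -
    have "sons v - ?son ` M = ?son ` (- M)"
      unfolding sons_def Compl_eq_Diff_UNIV by (rule image_set_diff[OF inj, symmetric])
    then show ?thesis by (simp add: finite_image_iff[OF inj_on_subset[OF inj]])
  qed
  show ?thesis
  proof (intro equalityI subsetI)
    fix G assume "G \<in> shoot F v"
    then obtain C where C: "G = (\<Union>x\<in>C. F x)" "C \<subseteq> sons v" "finite (sons v - C)"
      unfolding shoot_def by blast
    then obtain M where "C = ?son ` M" unfolding sons_def by (auto simp: subset_image_iff)
    with C finite_iff show "G \<in> {(\<Union>m\<in>M. F (v @ [m])) | M. finite (- M)}"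
      by (auto simp: image_image)
  next
    fix G assume "G \<in> {(\<Union>m\<in>M. F (v @ [m])) | M. finite (- M)}"
    then obtain M where M: "G = (\<Union>m\<in>M. F (v @ [m]))" "finite (- M)" by blast
    have "?son ` M \<subseteq> sons v" unfolding sons_def by blast
    moreover have "G = (\<Union>x\<in>?son ` M. F x)" using M(1) by (simp add: image_image)
    ultimately show "G \<in> shoot F v"
      using M(2) finite_iff[of M] unfolding shoot_def by blast
  qed
qed

lemma shoot_nonempty:
  assumes "strict_branches F" "G \<in> shoot F v"
  shows "G \<noteq> {}"
proof -
  obtain M where M: "G = (\<Union>m\<in>M. F (v @ [m]))" "finite (- M)"
    using assms(2) unfolding shoot_eq by blast
  then have "M \<noteq> {}" using infinite_UNIV_nat by auto
  with M(1) strict_branches_nonempty[OF assms(1)] show ?thesis by blast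
qed

lemma locally_strict_Union:
  assumes "locally_strict F"
  shows "F v = (\<Union>m. F (v @ [m]))"
proof -
  have "F v = (\<Union>s\<in>sons v. F s)"
    using assms[unfolded locally_strict_def, THEN spec, of v] by (rule conjunct1)
  then show ?thesis by (simp only: sons_def image_image)
qed

lemma locally_strict_sons_disjoint:
  assumes "locally_strict F" "m \<noteq> n"
  shows "F (v @ [m]) \<inter> F (v @ [n]) = {}"
proof -
  have "disjoint_family_on F (sons v)"
    using assms(1)[unfolded locally_strict_def, THEN spec, of v] by (rule conjunct2)
  with assms(2) show ?thesis unfolding disjoint_family_on_def sons_def by simp
qed

lemma locally_strict_mono:
  assumes F: "locally_strict F" and "prefix x y"
  shows "F y \<subseteq> F x"
proof -
  obtain z where "y = x @ z" using assms(2) prefixE by blast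
  moreover have "F (x @ z) \<subseteq> F x"
  proof (induction z rule: rev_induct)
    case (snoc m z)
    have "F (x @ z @ [m]) \<subseteq> F (x @ z)"
      using locally_strict_Union[OF F, of "x @ z"] by auto
    with snoc show ?case by simp
  qed simp
  ultimately show ?thesis by simp
qed

lemma locally_strict_parallel_disjoint:
  assumes F: "locally_strict F" and "x \<parallel> y"
  shows "F x \<inter> F y = {}"
proof -
  obtain v b c xs ys where bc: "b \<noteq> c" and xy: "x = v @ b # xs" "y = v @ c # ys"
    using parallel_decomp[OF assms(2)] by blast
  have "F x \<subseteq> F (v @ [b])" "F y \<subseteq> F (v @ [c])"
    using locally_strict_mono[OF F] xy by (simp_all add: prefix_def)
  with locally_strict_sons_disjoint[OF F bc] show ?thesis by blast
qed

lemma locally_strict_same_length: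
  assumes F: "locally_strict F" and "p \<in> F x" "p \<in> F y" "length x = length y"
  shows "x = y"
proof (rule ccontr)
  assume "x \<noteq> y"
  with assms(4) have "x \<parallel> y" by (auto intro!: parallelI dest: prefix_length_eq)
  with assms(2,3) locally_strict_parallel_disjoint[OF F] show False by blast
qed

lemma locally_strict_exists_son:
  "locally_strict F \<Longrightarrow> p \<in> F v \<Longrightarrow> \<exists>m. p \<in> F (v @ [m])"
  using locally_strict_Union[of F v] by auto

lemma strict_branches_prefix_chain:
  assumes F: "locally_strict F" "strict_branches F"
    and mono: "\<And>k j. k \<le> j \<Longrightarrow> prefix (s k) (s j)" and long: "\<And>k. k \<le> length (s k)"
  shows "\<exists>q. (\<Inter>k. F (s k)) = {q}"
proof -
  obtain \<alpha> where s: "\<And>k. initial \<alpha> (length (s k)) = s k"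
    using prefix_chain_eq_initial[OF mono long] by blast
  obtain q where q: "(\<Inter>k. F (initial \<alpha> k)) = {q}" using strict_branches_initial[OF F(2)] by blast
  have "F (s k) \<subseteq> F (initial \<alpha> k)" for k
    using locally_strict_mono[OF F(1) prefix_initial[OF long[of k], of \<alpha>]] by (simp only: s)
  then have "(\<Inter>k. F (s k)) \<subseteq> (\<Inter>k. F (initial \<alpha> k))" by blast
  then have "(\<Inter>k. F (s k)) \<subseteq> {q}" by (simp only: q)
  moreover have "q \<in> F (s k)" for k
  proof -
    have "q \<in> (\<Inter>k. F (initial \<alpha> k))" unfolding q by simp
    then have "q \<in> F (initial \<alpha> (length (s k)))" by (rule INT_D) simp
    then show ?thesis by (simp only: s)
  qed
  ultimately have "(\<Inter>k. F (s k)) = {q}" by blast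
  then show ?thesis ..
qed

definition address :: "'a foliage \<Rightarrow> 'a \<Rightarrow> nat \<Rightarrow> nat" where
  "address F p = (SOME \<alpha>. \<forall>k. p \<in> F (initial \<alpha> k))"

lemma in_address:
  assumes F: "locally_strict F" and p: "p \<in> F []"
  shows "p \<in> F (initial (address F p) k)"
proof -
  have "\<exists>v. length v = k \<and> p \<in> F v" for k
  proof (induction k)
    case 0 show ?case using p by auto
  next
    case (Suc k)
    then obtain v where v: "length v = k" "p \<in> F v" by blast
    then obtain m where "p \<in> F (v @ [m])" using locally_strict_exists_son[OF F] by blast
    with v(1) show ?case by (intro exI[of _ "v @ [m]"]) simp
  qed
  then obtain s where s: "\<And>k. length (s k) = k" "\<And>k. p \<in> F (s k)" by metis
  have "prefix (s k) (s j)" if "k \<le> j" for k j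
  proof -
    have "p \<in> F (take k (s j))" using locally_strict_mono[OF F take_is_prefix] s(2) by blast
    then have "take k (s j) = s k"
      by (rule locally_strict_same_length[OF F _ s(2)]) (simp add: s(1) that)
    then show ?thesis by (metis take_is_prefix)
  qed
  then obtain \<alpha> where \<alpha>: "\<And>k. initial \<alpha> (length (s k)) = s k"
    using prefix_chain_eq_initial[of s] s(1) by force
  have "\<forall>k. p \<in> F (initial \<alpha> k)"
  proof
    fix k show "p \<in> F (initial \<alpha> k)" using \<alpha>[of k] s(2)[of k] by (simp add: s(1))
  qed
  then have "\<forall>k. p \<in> F (initial (address F p) k)" unfolding address_def
    by (rule someI[of "\<lambda>\<alpha>. \<forall>k. p \<in> F (initial \<alpha> k)"])
  then show ?thesis ..
qed

lemma initial_address: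
  assumes F: "locally_strict F" and "p \<in> F v"
  shows "initial (address F p) (length v) = v"
proof -
  have "p \<in> F []" using locally_strict_mono[OF F Nil_prefix] assms(2) by blast
  then show ?thesis
    by (rule locally_strict_same_length[OF F in_address[OF F] assms(2)]) simp
qed

lemma address_inj:
  assumes F: "locally_strict F" "strict_branches F"
    and "p \<in> F []" "q \<in> F []" "address F p = address F q"
  shows "p = q"
proof -
  obtain r where r: "(\<Inter>k. F (initial (address F p) k)) = {r}"
    using strict_branches_initial[OF F(2)] by blast
  have "p \<in> (\<Inter>k. F (initial (address F p) k))" "q \<in> (\<Inter>k. F (initial (address F p) k))"
    using in_address[OF F(1) assms(3)] in_address[OF F(1) assms(4)] assms(5) by auto
  then show ?thesis by (simp only: r) simp
qed

(* For a with address \<alpha>, the leaves at these nodes partition F (initial \<alpha> l) - {a}. *)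
definition remainder_nodes :: "(nat \<Rightarrow> nat) \<Rightarrow> nat \<Rightarrow> nat list set" where
  "remainder_nodes \<alpha> l = {initial \<alpha> n @ [c] | n c. l \<le> n \<and> c \<noteq> \<alpha> n}"

lemma remainder_nodes_extend:
  assumes "r \<in> remainder_nodes \<alpha> l"
  shows "prefix (initial \<alpha> l) r \<and> l < length r"
proof -
  obtain n c where r: "r = initial \<alpha> n @ [c]" "l \<le> n"
    using assms unfolding remainder_nodes_def by blast
  then show ?thesis using prefix_initial[of l n \<alpha>] by auto
qed

lemma not_prefix_remainder_node:
  assumes "c \<noteq> \<alpha> n" "(n, c) \<noteq> (n', c')"
  shows "\<not> prefix (initial \<alpha> n @ [c]) (initial \<alpha> n' @ [c'])"
proof
  assume pre: "prefix (initial \<alpha> n @ [c]) (initial \<alpha> n' @ [c'])"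
  then have "length (initial \<alpha> n @ [c]) \<le> length (initial \<alpha> n' @ [c'])" by (rule prefix_length_le)
  then have "n \<le> n'" by simp
  show False
  proof (cases "n = n'")
    case True
    with pre assms(2) show False by simp
  next
    case False
    with \<open>n \<le> n'\<close> have succ: "prefix (initial \<alpha> (Suc n)) (initial \<alpha> n')"
      by (intro prefix_initial) simp
    moreover have "initial \<alpha> n @ [c] \<noteq> initial \<alpha> n' @ [c']"
    proof
      assume "initial \<alpha> n @ [c] = initial \<alpha> n' @ [c']"
      then have "length (initial \<alpha> n @ [c]) = length (initial \<alpha> n' @ [c'])" by (rule arg_cong)
      with False show False by simp
    qed
    with pre have "prefix (initial \<alpha> n @ [c]) (initial \<alpha> n')" by (simp del: append1_eq_conv)
    then have "prefix (initial \<alpha> n @ [c]) (initial \<alpha> (Suc n))"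
      by (rule comparable_prefix[OF prefix_same_cases[OF _ succ]]) simp
    then have "initial \<alpha> n @ [c] = initial \<alpha> (Suc n)" by (rule prefix_length_eq) simp
    with assms(1) show False by simp
  qed
qed

lemma remainder_nodes_parallel:
  assumes "r \<in> remainder_nodes \<alpha> l" "r' \<in> remainder_nodes \<alpha> l" "r \<noteq> r'"
  shows "r \<parallel> r'"
proof -
  obtain n c n' c' where r: "r = initial \<alpha> n @ [c]" "c \<noteq> \<alpha> n"
    and r': "r' = initial \<alpha> n' @ [c']" "c' \<noteq> \<alpha> n'"
    using assms(1,2) unfolding remainder_nodes_def by blast
  with assms(3) have ne: "(n, c) \<noteq> (n', c')" by auto
  show ?thesis unfolding r(1) r'(1)
    using not_prefix_remainder_node[of c \<alpha> n n' c', OF r(2) ne]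
      not_prefix_remainder_node[of c' \<alpha> n' n c, OF r'(2) not_sym[OF ne]]
    by (rule parallelI)
qed

lemma countable_remainder_nodes: "countable (remainder_nodes \<alpha> l)"
proof -
  have "remainder_nodes \<alpha> l \<subseteq> (\<lambda>(n, c). initial \<alpha> n @ [c]) ` UNIV"
  proof
    fix r assume "r \<in> remainder_nodes \<alpha> l"
    then obtain n c where "r = initial \<alpha> n @ [c]" unfolding remainder_nodes_def by blast
    then show "r \<in> (\<lambda>(n, c). initial \<alpha> n @ [c]) ` UNIV"
      using rangeI[of "\<lambda>(n, c). initial \<alpha> n @ [c]" "(n, c)"] by simp
  qed
  then show ?thesis by (rule countable_subset) simp
qed

lemma infinite_remainder_nodes: "infinite (remainder_nodes \<alpha> l)"
proof -
  let ?r = "\<lambda>n. initial \<alpha> (l + n) @ [Suc (\<alpha> (l + n))]"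
  have "inj ?r" by (rule injI) (drule arg_cong[where f = length], simp)
  moreover have "?r n \<in> remainder_nodes \<alpha> l" for n
    unfolding remainder_nodes_def by (intro CollectI exI[of _ "l + n"] exI[of _ "Suc (\<alpha> (l + n))"]) simp
  then have "range ?r \<subseteq> remainder_nodes \<alpha> l" by blast
  ultimately show ?thesis using range_inj_infinite infinite_super by blast
qed

lemma notin_remainder_nodes:
  assumes F: "locally_strict F" and a: "a \<in> F []" and "r \<in> remainder_nodes (address F a) l"
  shows "a \<notin> F r"
proof
  assume "a \<in> F r"
  obtain n c where r: "r = initial (address F a) n @ [c]" "c \<noteq> address F a n"
    using assms(3) unfolding remainder_nodes_def by blast
  have "a \<in> F (initial (address F a) (Suc n))" by (rule in_address[OF F a])
  then have "initial (address F a) (Suc n) = r"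
    by (rule locally_strict_same_length[OF F _ \<open>a \<in> F r\<close>]) (simp add: r(1))
  with r show False by simp
qed

lemma remainder_nodes_cover:
  assumes F: "locally_strict F" "strict_branches F"
    and a: "a \<in> F u" and x: "x \<in> F u" "x \<noteq> a"
  shows "\<exists>r\<in>remainder_nodes (address F a) (length u). x \<in> F r"
proof -
  let ?\<alpha> = "address F a" and ?\<beta> = "address F x"
  have root: "a \<in> F []" "x \<in> F []"
    using locally_strict_mono[OF F(1) Nil_prefix] a x(1) by blast+
  then have "?\<alpha> \<noteq> ?\<beta>" using address_inj[OF F root] x(2) by blast
  then have ex: "\<exists>n. ?\<alpha> n \<noteq> ?\<beta> n" by auto
  define n where "n = (LEAST n. ?\<alpha> n \<noteq> ?\<beta> n)"
  have differ: "?\<alpha> n \<noteq> ?\<beta> n" unfolding n_def by (rule LeastI_ex[OF ex])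
  have below: "initial ?\<alpha> n = initial ?\<beta> n"
    unfolding initial_def by (rule map_cong) (auto simp: n_def dest: not_less_Least)
  have "length u \<le> n"
  proof (rule ccontr)
    assume "\<not> length u \<le> n"
    then have "?\<alpha> n = initial ?\<alpha> (length u) ! n" "?\<beta> n = initial ?\<beta> (length u) ! n"
      by simp_all
    with differ show False by (simp only: initial_address[OF F(1) a] initial_address[OF F(1) x(1)])
  qed
  then have "initial ?\<alpha> n @ [?\<beta> n] \<in> remainder_nodes ?\<alpha> (length u)"
    using differ unfolding remainder_nodes_def by (intro CollectI exI[of _ n] exI[of _ "?\<beta> n"]) simp
  moreover have "x \<in> F (initial ?\<alpha> n @ [?\<beta> n])"
    using in_address[OF F(1) root(2), of "Suc n"] below by simp
  ultimately show ?thesis ..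
qed

locale countable_removal =
  fixes F :: "'a foliage" and A :: "'a set"
  assumes locally_strict: "locally_strict F"
    and strict_branches: "strict_branches F"
    and countable: "countable A"
begin

(* Height 2n removes the n-th point of A.  The conjunct removed_at l \<in> A in removes only
   matters for A = {}, where from_nat_into A is junk. *)
definition removed_at :: "nat \<Rightarrow> 'a" where
  "removed_at l = from_nat_into A (l div 2)"

definition removes :: "nat \<Rightarrow> nat list \<Rightarrow> bool" where
  "removes l u \<longleftrightarrow> even l \<and> removed_at l \<in> A \<and> removed_at l \<in> F u"

definition child :: "nat \<Rightarrow> nat list \<Rightarrow> nat \<Rightarrow> nat list" where
  "child l u m = (if removes l u
     then from_nat_into (remainder_nodes (address F (removed_at l)) (length u)) m
     else u @ [m])"

primrec node_rev :: "nat list \<Rightarrow> nat list" where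
  "node_rev [] = []"
| "node_rev (m # w) = child (length w) (node_rev w) m"

definition node :: "nat list \<Rightarrow> nat list" where
  "node w = node_rev (rev w)"

lemma node_Nil [simp]: "node [] = []"
  by (simp add: node_def)

lemma node_snoc [simp]: "node (w @ [m]) = child (length w) (node w) m"
  by (simp add: node_def)

definition pruned :: "'a foliage" where
  "pruned w = F (node w) - A"

lemma bij_betw_child:
  assumes "removes l u"
  shows "bij_betw (child l u) UNIV (remainder_nodes (address F (removed_at l)) (length u))"
proof -
  have "child l u = from_nat_into (remainder_nodes (address F (removed_at l)) (length u))"
    using assms by (simp add: child_def fun_eq_iff)
  then show ?thesis
    by (simp only: bij_betw_from_nat_into[OF countable_remainder_nodes infinite_remainder_nodes])
qed

lemma child_extends: "prefix u (child l u m) \<and> length u < length (child l u m)"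
proof (cases "removes l u")
  case True
  then have a: "removed_at l \<in> F u" unfolding removes_def by blast
  have "child l u m \<in> remainder_nodes (address F (removed_at l)) (length u)"
    using bij_betw_apply[OF bij_betw_child[OF True]] by simp
  then show ?thesis
    using remainder_nodes_extend initial_address[OF locally_strict a] by metis
next
  case False then show ?thesis by (simp add: child_def)
qed

lemma child_parallel:
  assumes "m \<noteq> m'"
  shows "child l u m \<parallel> child l u m'"
proof (cases "removes l u")
  case True
  note bij = bij_betw_child[OF True]
  show ?thesis
  proof (rule remainder_nodes_parallel)
    show "child l u m \<in> remainder_nodes (address F (removed_at l)) (length u)"
      "child l u m' \<in> remainder_nodes (address F (removed_at l)) (length u)"
      using bij_betw_apply[OF bij] by simp_all
    show "child l u m \<noteq> child l u m'"
      using bij_betw_imp_inj_on[OF bij] assms by (auto dest: injD)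
  qed
next
  case False with assms show ?thesis by (simp add: child_def parallel_def)
qed

lemma child_cover: "F u - A = (\<Union>m. F (child l u m)) - A"
proof -
  have "F (child l u m) \<subseteq> F u" for m
    using locally_strict_mono[OF locally_strict] child_extends by blast
  moreover have "\<exists>m. x \<in> F (child l u m)" if x: "x \<in> F u" "x \<notin> A" for x
  proof (cases "removes l u")
    case True
    then have a: "removed_at l \<in> F u" "removed_at l \<in> A" unfolding removes_def by blast+
    with x have "x \<noteq> removed_at l" by blast
    then obtain r where r: "r \<in> remainder_nodes (address F (removed_at l)) (length u)" "x \<in> F r"
      using remainder_nodes_cover[OF locally_strict strict_branches a(1) x(1)] by blast
    then obtain m where "r = child l u m"
      using bij_betw_child[OF True] unfolding bij_betw_def by (metis rangeE)
    with r(2) show ?thesis by blast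
  next
    case False
    then show ?thesis using locally_strict_Union[OF locally_strict, of u] x(1) by (simp add: child_def)
  qed
  ultimately show ?thesis by blast
qed

lemma removed_at_notin_child:
  assumes "removes l u"
  shows "removed_at l \<notin> F (child l u m)"
proof -
  have "removed_at l \<in> F []"
    using assms locally_strict_mono[OF locally_strict Nil_prefix] unfolding removes_def by blast
  moreover have "child l u m \<in> remainder_nodes (address F (removed_at l)) (length u)"
    using bij_betw_apply[OF bij_betw_child[OF assms]] by simp
  ultimately show ?thesis by (rule notin_remainder_nodes[OF locally_strict])
qed

lemma prefix_node:
  assumes "prefix w w'"
  shows "prefix (node w) (node w')"
proof -
  obtain z where "w' = w @ z" using assms prefixE by blast
  moreover have "prefix (node w) (node (w @ z))"
  proof (induction z rule: rev_induct)
    case (snoc m z)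
    then show ?case
      using child_extends[of "node (w @ z)" "length (w @ z)" m] prefix_order.trans
      by (metis append_assoc node_snoc)
  qed simp
  ultimately show ?thesis by simp
qed

lemma length_node_snoc: "length (node w) < length (node (w @ [m]))"
  using child_extends by simp

lemma length_node: "length w \<le> length (node w)"
proof (induction w rule: rev_induct)
  case (snoc m w)
  then show ?case using length_node_snoc[of w m] by simp
qed simp

lemma pruned_snoc: "pruned (w @ [m]) = F (child (length w) (node w) m) - A"
  by (simp add: pruned_def)

lemma locally_strict_pruned: "locally_strict pruned"
  unfolding locally_strict_def
proof (intro allI conjI)
  fix w
  have "pruned w = (\<Union>m. F (child (length w) (node w) m)) - A"
    unfolding pruned_def by (rule child_cover)
  also have "\<dots> = (\<Union>m. pruned (w @ [m]))"
    unfolding pruned_snoc by auto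
  also have "\<dots> = (\<Union>s\<in>sons w. pruned s)"
    by (simp add: sons_def image_image)
  finally show "pruned w = (\<Union>s\<in>sons w. pruned s)" .
  show "disjoint_family_on pruned (sons w)"
    unfolding disjoint_family_on_def
  proof (intro ballI impI)
    fix s s' assume "s \<in> sons w" "s' \<in> sons w" "s \<noteq> s'"
    then obtain m m' where s: "s = w @ [m]" "s' = w @ [m']" "m \<noteq> m'"
      unfolding sons_def by auto
    have "F (child (length w) (node w) m) \<inter> F (child (length w) (node w) m') = {}"
      by (rule locally_strict_parallel_disjoint[OF locally_strict child_parallel[OF s(3)]])
    then show "pruned s \<inter> pruned s' = {}" unfolding s(1,2) pruned_snoc by blast
  qed
qed

lemma strict_branches_pruned: "strict_branches pruned"
  unfolding strict_branches_def
proof (intro allI impI)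
  fix B assume "tree_branch B"
  then obtain \<beta> where B: "B = range (initial \<beta>)" using tree_branch_eq_range_initial by blast
  define s where "s k = node (initial \<beta> k)" for k
  have mono: "prefix (s k) (s j)" if "k \<le> j" for k j
    unfolding s_def using prefix_node[OF prefix_initial[OF that]] .
  have long: "k \<le> length (s k)" for k
    unfolding s_def using length_node[of "initial \<beta> k"] by simp
  obtain q where q: "(\<Inter>k. F (s k)) = {q}"
    using strict_branches_prefix_chain[OF locally_strict strict_branches mono long] by blast
  then have q_in: "q \<in> F (s k)" for k by blast
  have "q \<notin> A"
  proof
    assume "q \<in> A"
    then obtain n where "from_nat_into A n = q" using from_nat_into_surj[OF countable] by blast
    then have n: "removed_at (2 * n) = q" unfolding removed_at_def by simp
    with \<open>q \<in> A\<close> q_in have "removes (2 * n) (s (2 * n))" unfolding removes_def by simp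
    from removed_at_notin_child[OF this] n
    have "q \<notin> F (child (2 * n) (s (2 * n)) (\<beta> (2 * n)))" by simp
    moreover have "child (2 * n) (s (2 * n)) (\<beta> (2 * n)) = s (Suc (2 * n))"
      unfolding s_def by simp
    ultimately show False using q_in by simp
  qed
  have "(\<Inter>x\<in>B. pruned x) = (\<Inter>k. pruned (initial \<beta> k))"
    unfolding B by (simp only: image_image)
  also have "\<dots> = (\<Inter>k. F (s k)) - A"
    unfolding pruned_def s_def by auto
  also have "\<dots> = {q}" using q \<open>q \<notin> A\<close> by auto
  finally show "\<exists>p. (\<Inter>x\<in>B. pruned x) = {p}" ..
qed

lemma open_foliage_pruned:
  assumes "open_foliage X F"
  shows "open_foliage (subtopology X (topspace X - A)) pruned"
  unfolding open_foliage_def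
proof
  fix w
  have open_leaf: "openin X (F (node w))" using assms unfolding open_foliage_def by blast
  then have "pruned w = F (node w) \<inter> (topspace X - A)"
    using openin_subset unfolding pruned_def by blast
  with open_leaf show "openin (subtopology X (topspace X - A)) (pruned w)"
    by (simp add: openin_subtopology_Int)
qed

(* At odd heights no point is removed, so the sons of w in pruned are the sons of node w
   in F, minus A; this is what transports rise from F to pruned. *)

lemma baire_foliage_tree_pruned:
  assumes "baire_foliage_tree X F"
  shows "baire_foliage_tree (subtopology X (topspace X - A)) pruned"
proof -
  have "open_foliage X F" "F [] = topspace X"
    using assms unfolding baire_foliage_tree_def by auto
  moreover have "pruned [] = F [] - A" by (simp add: pruned_def)
  ultimately show ?thesis unfolding baire_foliage_tree_def
    using open_foliage_pruned locally_strict_pruned strict_branches_pruned by auto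
qed

lemma gg_shoot_pruned:
  assumes "odd (length w)" and "gg (shoot F (node w)) {U}"
  shows "gg (shoot pruned w) {U - A}"
  unfolding gg_def
proof (intro ballI impI)
  fix D assume "D \<in> {U - A}" "D \<noteq> {}"
  then have D: "D = U - A" "U \<noteq> {}" by auto
  with assms(2) obtain G where G: "G \<in> shoot F (node w)" "G \<subseteq> U"
    unfolding gg_def by blast
  then obtain M where M: "G = (\<Union>m\<in>M. F (node w @ [m]))" "finite (- M)"
    unfolding shoot_eq by blast
  have "\<not> removes (length w) (node w)" using assms(1) unfolding removes_def by simp
  then have "G - A = (\<Union>m\<in>M. pruned (w @ [m]))"
    unfolding M(1) pruned_snoc child_def by auto
  moreover have "(\<Union>m\<in>M. pruned (w @ [m])) \<in> shoot pruned w"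
    unfolding shoot_eq using M(2) by blast
  ultimately have shoot: "G - A \<in> shoot pruned w" by simp
  then have "G - A \<noteq> {}" by (rule shoot_nonempty[OF strict_branches_pruned])
  moreover have "G - A \<subseteq> D" using G(2) D(1) by blast
  ultimately have "G - A \<noteq> {} \<and> G - A \<subseteq> D" ..
  with shoot show "\<exists>G\<in>shoot pruned w. G \<noteq> {} \<and> G \<subseteq> D" by (intro bexI)
qed

lemma rise_pruned:
  assumes p: "p \<in> F [] - A"
  shows "\<exists>f. strict_mono f \<and> (\<forall>U. {2 * n + 1 | n. f n \<in> rise F p U} \<subseteq> rise pruned p (U - A))"
proof -
  let ?W = "initial (address pruned p)"
  have "p \<in> pruned []" using p unfolding pruned_def by simp
  then have pW: "p \<in> pruned (?W k)" for k by (rule in_address[OF locally_strict_pruned])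
  define f where "f n = length (node (?W (2 * n + 1)))" for n
  have "strict_mono f"
  proof (rule strict_mono_Suc_iff[THEN iffD2], intro allI)
    fix n
    have "f n < length (node (?W (Suc (2 * n + 1))))"
      unfolding f_def initial_Suc by (rule length_node_snoc)
    also have "\<dots> < length (node (?W (Suc (Suc (2 * n + 1)))))"
      unfolding initial_Suc[of _ "Suc (2 * n + 1)"] by (rule length_node_snoc)
    also have "\<dots> = f (Suc n)"
      unfolding f_def by simp
    finally show "f n < f (Suc n)" .
  qed
  have "2 * n + 1 \<in> rise pruned p (U - A)" if rise: "f n \<in> rise F p U" for n U
  proof -
    let ?w = "?W (2 * n + 1)"
    obtain v where v: "f n = length v" "p \<in> F v" "gg (shoot F v) {U}"
      using rise unfolding rise_def scope_def by blast
    have "p \<in> F (node ?w)" using pW[of "2 * n + 1"] unfolding pruned_def by blast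
    then have "v = node ?w"
      by (rule locally_strict_same_length[OF locally_strict v(2)]) (simp only: v(1)[symmetric] f_def)
    with v(3) have "gg (shoot pruned ?w) {U - A}" by (intro gg_shoot_pruned) simp_all
    with pW[of "2 * n + 1"] show ?thesis
      unfolding rise_def scope_def by (intro CollectI exI[of _ ?w]) simp
  qed
  then have "{2 * n + 1 | n. f n \<in> rise F p U} \<subseteq> rise pruned p (U - A)" for U
    by blast
  with \<open>strict_mono f\<close> show ?thesis by blast
qed

end

theorem proposition15:
  fixes X :: "'a topology" and F :: "'a foliage" and A :: "'a set"
  assumes "baire_foliage_tree X F"
    and "A \<subseteq> topspace X" and "countable A"
  shows "\<exists>H. baire_foliage_tree (subtopology X (topspace X - A)) H \<and>
    (\<forall>p\<in>topspace X - A. \<exists>f::nat \<Rightarrow> nat. strict_mono f \<and>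
       (\<forall>U. nbhd X p U \<longrightarrow>
          {2*n+1 | n. f n \<in> rise F p U} \<subseteq> rise H p (U - A)))"
proof -
  have F: "locally_strict F" "strict_branches F" "F [] = topspace X"
    using assms(1) unfolding baire_foliage_tree_def by auto
  interpret countable_removal F A
    using F(1,2) assms(3) by unfold_locales
  have "\<exists>f::nat \<Rightarrow> nat. strict_mono f \<and>
      (\<forall>U. nbhd X p U \<longrightarrow> {2*n+1 | n. f n \<in> rise F p U} \<subseteq> rise pruned p (U - A))"
    if "p \<in> topspace X - A" for p
  proof -
    have "p \<in> F [] - A" using that F(3) by simp
    then obtain f where "strict_mono f" "\<forall>U. {2*n+1 | n. f n \<in> rise F p U} \<subseteq> rise pruned p (U - A)"
      using rise_pruned by blast
    then show ?thesis by blast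
  qed
  with baire_foliage_tree_pruned[OF assms(1)] show ?thesis by blast
qed

end
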